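(* Let $n\geq1$ and $N=n(n+3)/2$. For real parameters $u_{ij}$ ($1\leq j\leq i\leq n$) and $v_1,\ldots,v_n$ (together $N$ parameters), let $Y_1$ be the lower triangular $n\times n$ matrix with $(i,j)$-entry $u_{ij}$ for $i\geq j$ and $0$ otherwise, and let $Y_2$ be the $n\times n$ matrix whose last column is $(v_1,\ldots,v_n)^\top$, whose $(i+1,i)$-entries are $-1$ for $1\leq i\leq n-1$, and all of whose other entries are $0$. Define $G:\mathbb{R}^N\to\mathbb{R}^N$ by sending the parameters to the vector of coefficients of the monomials $x_1^ax_2^bx_3^c$ ($a+b+c=n$, $c\neq n$) in $\det(x_1Y_1+x_2Y_2+x_3E_n)$. Then the Jacobian determinant of $G$ is not identically zero.
   Context: $E_n$ is the $n\times n$ identity matrix; $x_1,x_2,x_3$ are indeterminates. Note that the monomials $x_1^ax_2^bx_3^c$ with $a+b+c=n$, $c\ne n$, are exactly $N=n(n+3)/2$ in number. *)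

theory Defs
  imports Complex_Main "HOL-Computational_Algebra.Polynomial" "Jordan_Normal_Form.Determinant"
begin

(* Trivariate real polynomials rendered as nested univariate polynomials:
   outer variable x1, middle variable x2, inner variable x3. *)
type_synonym tripoly = "real poly poly poly"

definition X1 :: tripoly where "X1 = [:0, 1:]"
definition X2 :: tripoly where "X2 = [:[:0, 1:]:]"
definition X3 :: tripoly where "X3 = [:[:[:0, 1:]:]:]"
definition constP :: "real \<Rightarrow> tripoly" where "constP c = [:[:[:c:]:]:]"

definition tcoeff :: "tripoly \<Rightarrow> nat \<Rightarrow> nat \<Rightarrow> nat \<Rightarrow> real" where
  "tcoeff P a b c = coeff (coeff (coeff P a) b) c"

(* Parameters are coordinates w 0, ..., w (N-1) of w :: nat => real, 0-based indices:
   u_{ij} (0 <= j <= i < n) is w (i*(i+1) div 2 + j);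
   v_i (0 <= i < n) is w (n*(n+1) div 2 + i). *)
definition numParams :: "nat \<Rightarrow> nat" where "numParams n = n * (n + 3) div 2"

definition Y1 :: "nat \<Rightarrow> (nat \<Rightarrow> real) \<Rightarrow> real mat" where
  "Y1 n w = mat n n (\<lambda>(i, j). if j \<le> i then w (i * (i + 1) div 2 + j) else 0)"

definition Y2 :: "nat \<Rightarrow> (nat \<Rightarrow> real) \<Rightarrow> real mat" where
  "Y2 n w = mat n n (\<lambda>(i, j). if j = n - 1 then w (n * (n + 1) div 2 + i)
                               else if i = j + 1 then -1 else 0)"

definition pencil :: "nat \<Rightarrow> (nat \<Rightarrow> real) \<Rightarrow> tripoly mat" where
  "pencil n w = mat n n (\<lambda>(i, j). X1 * constP (Y1 n w $$ (i, j)) + X2 * constP (Y2 n w $$ (i, j))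
                                  + X3 * (if i = j then 1 else 0))"

definition monoms :: "nat \<Rightarrow> (nat \<times> nat \<times> nat) list" where
  "monoms n = filter (\<lambda>(a, b, c). c \<noteq> n)
     (concat (map (\<lambda>a. map (\<lambda>b. (a, b, n - a - b)) [0..<Suc (n - a)]) [0..<Suc n]))"

definition Gmap :: "nat \<Rightarrow> (nat \<Rightarrow> real) \<Rightarrow> nat \<Rightarrow> real" where
  "Gmap n w r = (case monoms n ! r of (a, b, c) \<Rightarrow> tcoeff (det (pencil n w)) a b c)"

definition rderiv :: "(real \<Rightarrow> real) \<Rightarrow> real \<Rightarrow> real" where
  "rderiv f x = (SOME D. (f has_real_derivative D) (at x))"

definition jacobian :: "nat \<Rightarrow> (nat \<Rightarrow> real) \<Rightarrow> real mat" where
  "jacobian n w = mat (numParams n) (numParams n)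
     (\<lambda>(r, k). rderiv (\<lambda>t. Gmap n (w(k := t)) r) (w k))"

end

theory Submission
  imports Defs
begin

(*
  The Jacobian of G is nonsingular at the explicit parameter point wspec n, where Y1 is
  diag(1, ..., n) and Y2 has last column (1, ..., 1).

  1. Since det is affine in each matrix entry, the column of the Jacobian belonging to
     u_ij (resp. v_i) is the coefficient vector of x1 * cof_ij (resp. x2 * cof_{i,n-1}),
     where cof is the cofactor of the pencil x1 Y1 + x2 Y2 + x3 E_n.
  2. A kernel vector (du, dv) of the Jacobian therefore gives a combination
     Phi = sum du_ij x1 cof_ij + sum dv_i x2 cof_{i,n-1} whose listed coefficients vanish.
     Phi is homogeneous of degree n and has no x3^n term, hence Phi = 0.
  3. At wspec n and real x1, x2 >= 0, x3 > 0 the pencil is an explicitly invertible matrix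
     (lower bidiagonal plus a rank-one term, inverted by Sherman-Morrison), so the
     cofactors are det times entries of the explicit inverse, and Phi = 0 becomes a scalar
     identity in x1, x2, x3.
  4. Specialising this identity (x2 = 0; x1 = 0; a downward induction over rows using
     x2 -> 0) and using independence of partial fractions and of monomials shows that
     du and dv vanish.
*)

section \<open>Coefficients and homogeneity of trivariate polynomials\<close>

lemma tcoeff_add [simp]: "tcoeff (P + Q) a b c = tcoeff P a b c + tcoeff Q a b c"
  by (simp add: tcoeff_def)

lemma tcoeff_sum: "tcoeff (sum f S) a b c = (\<Sum>x\<in>S. tcoeff (f x) a b c)"
  by (induct S rule: infinite_finite_induct) (auto simp: tcoeff_def)

lemma constP_0 [simp]: "constP 0 = 0"
  by (simp add: constP_def)

lemma constP_diff: "constP a - constP b = constP (a - b)"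
  by (simp add: constP_def)

lemma tcoeff_constP_mult [simp]: "tcoeff (constP t * P) a b c = t * tcoeff P a b c"
  by (simp add: tcoeff_def constP_def)

lemma tcoeff_X1_mult_0: "tcoeff (X1 * P) 0 b c = 0"
  by (simp add: tcoeff_def X1_def)

lemma tcoeff_X2_mult_0: "tcoeff (X2 * P) a 0 c = 0"
  by (simp add: tcoeff_def X2_def)

lemma tcoeff_mult: "tcoeff (P * Q) a b c =
  (\<Sum>i\<le>a. \<Sum>j\<le>b. \<Sum>k\<le>c. tcoeff P i j k * tcoeff Q (a - i) (b - j) (c - k))"
  by (simp add: tcoeff_def coeff_mult coeff_sum)

lemma tripoly_eqI: "(\<And>a b c. tcoeff P a b c = tcoeff Q a b c) \<Longrightarrow> P = Q"
  unfolding tcoeff_def by (intro poly_eqI) blast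

definition homog :: "nat \<Rightarrow> tripoly \<Rightarrow> bool" where
  "homog d P \<longleftrightarrow> (\<forall>a b c. tcoeff P a b c \<noteq> 0 \<longrightarrow> a + b + c = d)"

lemma homog_0 [simp]: "homog d 0"
  by (simp add: homog_def tcoeff_def)

lemma homog_one [simp]: "homog 0 1"
  by (simp add: homog_def tcoeff_def coeff_1)

lemma homog_X1 [simp]: "homog 1 X1"
  by (simp add: homog_def tcoeff_def X1_def coeff_pCons split: nat.splits)

lemma homog_X2 [simp]: "homog 1 X2"
  by (simp add: homog_def tcoeff_def X2_def coeff_pCons split: nat.splits)

lemma homog_X3 [simp]: "homog 1 X3"
  by (simp add: homog_def tcoeff_def X3_def coeff_pCons split: nat.splits)

lemma homog_constP [simp]: "homog 0 (constP t)"
  by (simp add: homog_def tcoeff_def constP_def coeff_pCons split: nat.splits)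

lemma homog_add: "homog d P \<Longrightarrow> homog d Q \<Longrightarrow> homog d (P + Q)"
  unfolding homog_def by (metis add.left_neutral tcoeff_add)

lemma homog_uminus: "homog d P \<Longrightarrow> homog d (- P)"
  by (auto simp: homog_def tcoeff_def)

lemma homog_sum: "(\<And>x. x \<in> S \<Longrightarrow> homog d (f x)) \<Longrightarrow> homog d (sum f S)"
  by (induct S rule: infinite_finite_induct) (auto intro: homog_add)

lemma homog_mult:
  assumes "homog d P" "homog e Q"
  shows "homog (d + e) (P * Q)"
  unfolding homog_def
proof (intro allI impI)
  fix a b c assume "tcoeff (P * Q) a b c \<noteq> 0"
  then obtain i j k where ijk: "i \<le> a" "j \<le> b" "k \<le> c"
    "tcoeff P i j k * tcoeff Q (a - i) (b - j) (c - k) \<noteq> 0"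
    unfolding tcoeff_mult by (metis (no_types, lifting) atMost_iff sum.neutral)
  have "i + j + k = d"
    using assms(1) ijk(4) unfolding homog_def by (metis mult_zero_left)
  moreover have "(a - i) + (b - j) + (c - k) = e"
    using assms(2) ijk(4) unfolding homog_def by (metis mult_zero_right)
  ultimately show "a + b + c = d + e" using ijk by arith
qed

lemma homog_constP_mult: "homog d P \<Longrightarrow> homog d (constP c * P)"
  using homog_mult[OF homog_constP] by fastforce

lemma homog_power: "homog d P \<Longrightarrow> homog (k * d) (P ^ k)"
  by (induct k) (auto dest: homog_mult[of d P])

lemma homog_prod:
  "finite S \<Longrightarrow> (\<And>x. x \<in> S \<Longrightarrow> homog 1 (f x)) \<Longrightarrow> homog (card S) (prod f S)"
proof (induct S rule: finite_induct)
  case (insert x F)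
  thus ?case using homog_mult[of 1 "f x" "card F" "prod f F"] by simp
qed simp

lemma homog_det:
  assumes A: "A \<in> carrier_mat m m"
    and lin: "\<And>i j. i < m \<Longrightarrow> j < m \<Longrightarrow> homog 1 (A $$ (i, j))"
  shows "homog m (det A)"
proof -
  have "homog m (\<Sum>p\<in>{p. p permutes {0..<m}}. signof p * (\<Prod>i = 0..<m. A $$ (i, p i)))"
  proof (rule homog_sum)
    fix p assume "p \<in> {p. p permutes {0..<m}}"
    hence "\<And>i. i < m \<Longrightarrow> p i < m" by (auto dest: permutes_in_image)
    hence "homog (card {0..<m}) (\<Prod>i = 0..<m. A $$ (i, p i))"
      using lin by (intro homog_prod) auto
    moreover have "homog 0 (signof p :: tripoly)"
      by (simp add: sign_def homog_uminus)
    ultimately show "homog m (signof p * (\<Prod>i = 0..<m. A $$ (i, p i)))"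
      using homog_mult by fastforce
  qed
  thus ?thesis using det_def'[OF A] by simp
qed

text \<open>
  A form of degree n without x3^n term is zero as soon as its coefficients at the listed
  monomials vanish, since these are all the other monomials of degree n.
\<close>

definition mcoeff :: "tripoly \<Rightarrow> nat \<times> nat \<times> nat \<Rightarrow> real" where
  "mcoeff P m = (case m of (a, b, c) \<Rightarrow> tcoeff P a b c)"

lemma mcoeff_add: "mcoeff (P + Q) m = mcoeff P m + mcoeff Q m"
  by (simp add: mcoeff_def split: prod.splits)

lemma mcoeff_sum: "mcoeff (sum f S) m = (\<Sum>x\<in>S. mcoeff (f x) m)"
  by (simp add: mcoeff_def tcoeff_sum split: prod.splits)

lemma mcoeff_constP_mult: "mcoeff (constP c * P) m = c * mcoeff P m"
  by (simp add: mcoeff_def split: prod.splits)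

lemma monoms_mem:
  assumes "a + b + c = n" "c \<noteq> n"
  shows "(a, b, c) \<in> set (monoms n)"
proof -
  have range: "a < Suc n" "b < Suc (n - a)" "c = n - a - b" using assms by auto
  hence "(a, b, c) \<in> set (map (\<lambda>b. (a, b, n - a - b)) [0..<Suc (n - a)])" by auto
  hence "(a, b, c) \<in> set (concat (map (\<lambda>a. map (\<lambda>b. (a, b, n - a - b)) [0..<Suc (n - a)]) [0..<Suc n]))"
    using range(1) by (auto simp del: upt_Suc)
  thus ?thesis unfolding monoms_def using assms by (simp del: upt_Suc)
qed

lemma homog_eq_0_if_monoms_coeffs_0:
  assumes hom: "homog n P" and pure_x3: "tcoeff P 0 0 n = 0"
    and listed: "\<And>r. r < length (monoms n) \<Longrightarrow> mcoeff P (monoms n ! r) = 0"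
  shows "P = 0"
proof (rule tripoly_eqI)
  fix a b c
  show "tcoeff P a b c = tcoeff 0 a b c"
  proof (cases "a + b + c = n")
    case False thus ?thesis using hom unfolding homog_def by (auto simp: tcoeff_def)
  next
    case deg: True
    show ?thesis
    proof (cases "c = n")
      case True thus ?thesis using deg pure_x3 by (simp add: tcoeff_def)
    next
      case False
      then obtain r where "r < length (monoms n)" "monoms n ! r = (a, b, c)"
        using monoms_mem[OF deg] by (auto simp: in_set_conv_nth)
      thus ?thesis using listed[of r] by (simp add: mcoeff_def tcoeff_def)
    qed
  qed
qed

section \<open>Evaluation at real points\<close>

definition ev :: "real \<Rightarrow> real \<Rightarrow> real \<Rightarrow> tripoly \<Rightarrow> real" where
  "ev x1 x2 x3 P = poly (poly (poly P [:[:x1:]:]) [:x2:]) x3"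

interpretation ev_hom: comm_ring_hom "ev x1 x2 x3"
  by unfold_locales (auto simp: ev_def)

lemma ev_X1 [simp]: "ev x1 x2 x3 X1 = x1" by (simp add: ev_def X1_def)
lemma ev_X2 [simp]: "ev x1 x2 x3 X2 = x2" by (simp add: ev_def X2_def)
lemma ev_X3 [simp]: "ev x1 x2 x3 X3 = x3" by (simp add: ev_def X3_def)
lemma ev_constP [simp]: "ev x1 x2 x3 (constP c) = c" by (simp add: ev_def constP_def)

section \<open>Determinants and cofactors\<close>

lemma mat_delete_map_mat: "mat_delete (map_mat f A) i j = map_mat f (mat_delete A i j)"
proof (rule eq_matI)
  fix a b
  assume "a < dim_row (map_mat f (mat_delete A i j))" "b < dim_col (map_mat f (mat_delete A i j))"
  moreover from this have "(if a < i then a else Suc a) < dim_row A"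
    "(if b < j then b else Suc b) < dim_col A"
    by (auto simp: mat_delete_def)
  ultimately show "mat_delete (map_mat f A) i j $$ (a, b) = map_mat f (mat_delete A i j) $$ (a, b)"
    unfolding mat_delete_def by simp
qed (auto simp: mat_delete_def)

lemma (in comm_ring_hom) hom_cofactor: "hom (cofactor A i j) = cofactor (map_mat hom A) i j"
  unfolding cofactor_def mat_delete_map_mat hom_det by (simp add: hom_distribs)

lemma det_change_one_entry:
  fixes A A' :: "'a :: comm_ring_1 mat"
  assumes A: "A \<in> carrier_mat n n" and A': "A' \<in> carrier_mat n n" and i: "i < n" and j: "j < n"
    and same: "\<And>i' j'. i' < n \<Longrightarrow> j' < n \<Longrightarrow> (i', j') \<noteq> (i, j) \<Longrightarrow> A' $$ (i', j') = A $$ (i', j')"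
  shows "det A' = det A + (A' $$ (i, j) - A $$ (i, j)) * cofactor A i j"
proof -
  have cof: "cofactor A' i k = cofactor A i k" if "k < n" for k
  proof -
    have "mat_delete A' i k = mat_delete A i k"
    proof (rule eq_matI)
      fix a b assume "a < dim_row (mat_delete A i k)" "b < dim_col (mat_delete A i k)"
      hence ab: "a < n - 1" "b < n - 1" using A by auto
      define r where "r = (if a < i then a else Suc a)"
      define c where "c = (if b < k then b else Suc b)"
      have "r < n" "c < n" "r \<noteq> i" using ab unfolding r_def c_def by auto
      thus "mat_delete A' i k $$ (a, b) = mat_delete A i k $$ (a, b)"
        using ab A A' same[of r c] unfolding mat_delete_def r_def c_def by auto
    qed (use A A' in auto)
    thus ?thesis unfolding cofactor_def by simp
  qed
  define D where "D = A' $$ (i, j) - A $$ (i, j)"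
  have row: "A' $$ (i, k) = A $$ (i, k) + (if k = j then D else 0)" if "k < n" for k
    using same[of i k] i that unfolding D_def by auto
  have "det A' = (\<Sum>k<n. A' $$ (i, k) * cofactor A' i k)"
    by (rule laplace_expansion_row[OF A' i])
  also have "\<dots> = (\<Sum>k<n. A $$ (i, k) * cofactor A i k + (if k = j then D * cofactor A i j else 0))"
    by (rule sum.cong) (auto simp: cof row distrib_right)
  also have "\<dots> = det A + D * cofactor A i j"
    using j by (simp add: sum.distrib laplace_expansion_row[OF A i])
  finally show ?thesis unfolding D_def .
qed

lemma cofactor_from_right_inverse:
  fixes A B :: "'a :: comm_ring_1 mat"
  assumes A: "A \<in> carrier_mat n n" and B: "B \<in> carrier_mat n n" and AB: "A * B = 1\<^sub>m n"
    and i: "i < n" and j: "j < n"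
  shows "cofactor A i j = det A * B $$ (j, i)"
proof -
  have "adj_mat A = adj_mat A * (A * B)"
    by (simp add: AB right_mult_one_mat[OF adj_mat(1)[OF A]])
  also have "\<dots> = (adj_mat A * A) * B"
    by (rule assoc_mult_mat[symmetric, OF adj_mat(1)[OF A] A B])
  also have "\<dots> = det A \<cdot>\<^sub>m B"
    unfolding adj_mat(3)[OF A]
    using mult_smult_assoc_mat[OF one_carrier_mat[of n] B] left_mult_one_mat[OF B] by simp
  finally have "adj_mat A = det A \<cdot>\<^sub>m B" .
  moreover have "cofactor A i j = adj_mat A $$ (j, i)"
    using i j A by (simp add: adj_mat_def)
  ultimately show ?thesis using i j B by simp
qed

section \<open>Indexing the parameters\<close>

definition tri :: "nat \<Rightarrow> nat \<Rightarrow> nat" where "tri i j = i * (i + 1) div 2 + j"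

abbreviation uCount :: "nat \<Rightarrow> nat" where "uCount n \<equiv> n * (n + 1) div 2"

lemma uCount_Suc: "uCount (Suc i) = uCount i + Suc i"
  by (induct i) auto

lemma numParams_eq: "numParams n = uCount n + n"
proof -
  have "n * (n + 3) = n * (n + 1) + 2 * n" by (simp add: algebra_simps)
  thus ?thesis unfolding numParams_def by simp
qed

lemma tri_less: "j \<le> i \<Longrightarrow> i < n \<Longrightarrow> tri i j < uCount n"
proof (induct n)
  case (Suc n)
  thus ?case using uCount_Suc[of n] by (cases "i = n") (auto simp: tri_def)
qed simp

lemma tri_inj:
  assumes "j \<le> i" "j' \<le> i'" "tri i j = tri i' j'"
  shows "i = i' \<and> j = j'"
proof -
  have less: "tri a b < tri a' b'" if "b \<le> a" "a < a'" for a b a' b'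
    using tri_less[OF that] by (simp add: tri_def)
  have "i = i'" using less[OF assms(1)] less[OF assms(2)] assms(3) by (metis less_irrefl nat_neq_iff)
  thus ?thesis using assms by (simp add: tri_def)
qed

lemma sum_lessThan_add: "(\<Sum>k < T + (m::nat). f k) = (\<Sum>k < T. f k) + (\<Sum>j < m. f (T + j))"
  by (induct m) (auto simp: add_ac)

lemma sum_uCount: "(\<Sum>k < uCount n. f k) = (\<Sum>i<n. \<Sum>j\<le>i. f (tri i j))"
proof (induct n)
  case (Suc n)
  have "(\<Sum>k < uCount (Suc n). f k) = (\<Sum>k < uCount n. f k) + (\<Sum>j < Suc n. f (uCount n + j))"
    unfolding uCount_Suc by (rule sum_lessThan_add)
  also have "(\<Sum>j < Suc n. f (uCount n + j)) = (\<Sum>j\<le>n. f (tri n j))"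
    by (simp add: tri_def lessThan_Suc_atMost)
  finally show ?case using Suc by simp
qed simp

lemma sum_params:
  "(\<Sum>k<numParams n. f k) = (\<Sum>i<n. \<Sum>j\<le>i. f (tri i j)) + (\<Sum>i<n. f (uCount n + i))"
  unfolding numParams_eq sum_lessThan_add sum_uCount ..

text \<open>There are N = numParams n listed monomials, so the Jacobian is square.\<close>

lemma length_monoms: "length (monoms n) = numParams n"
proof -
  let ?row = "\<lambda>a. map (\<lambda>b. (a, b, n - a - b)) [0..<Suc (n - a)]"
  let ?P = "\<lambda>(a::nat, b::nat, c::nat). c \<noteq> n"
  have row_len: "length (filter ?P (?row a)) = (if a = 0 then n else Suc (n - a))" if "a \<le> n" for a
  proof (cases "a = 0")
    case True
    have "[0..<Suc n] = 0 # [1..<Suc n]" by (simp add: upt_conv_Cons del: upt_Suc)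
    moreover have "filter (\<lambda>b. n - b \<noteq> n) [1..<Suc n] = [1..<Suc n]"
      by (rule filter_True) auto
    ultimately show ?thesis using True by (simp add: filter_map comp_def del: upt_Suc)
  next
    case False
    hence "filter ?P (?row a) = ?row a" using that by (auto intro!: filter_True)
    thus ?thesis using False by simp
  qed
  have "length (monoms n) = (\<Sum>a<Suc n. length (filter ?P (?row a)))"
    unfolding monoms_def
    by (simp add: filter_concat length_concat comp_def interv_sum_list_conv_sum_set_nat
        atLeast0LessThan del: upt_Suc)
  also have "\<dots> = (\<Sum>a<Suc n. if a = 0 then n else Suc (n - a))"
    by (intro sum.cong refl row_len) simp
  also have "\<dots> = n + (\<Sum>a\<in>{1..n}. Suc (n - a))"
  proof -
    have "{..<Suc n} = insert 0 {1..n}" by auto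
    thus ?thesis by (simp add: sum.insert)
  qed
  also have "(\<Sum>a\<in>{1..n}. Suc (n - a)) = uCount n"
  proof (induct n)
    case (Suc n)
    have "(\<Sum>a\<in>{1..n}. Suc (Suc n - a)) = (\<Sum>a\<in>{1..n}. Suc (n - a) + 1)"
      by (rule sum.cong) auto
    also have "\<dots> = (\<Sum>a\<in>{1..n}. Suc (n - a)) + n"
      by (simp only: sum.distrib) simp
    finally have "(\<Sum>a\<in>{1..n}. Suc (Suc n - a)) = (\<Sum>a\<in>{1..n}. Suc (n - a)) + n" .
    thus ?case using Suc uCount_Suc[of n] by simp
  qed simp
  finally show ?thesis using numParams_eq[of n] by simp
qed

section \<open>The columns of the Jacobian\<close>

lemma pencil_carrier [simp]: "pencil n w \<in> carrier_mat n n"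
  by (simp add: pencil_def)

lemma pencil_dim [simp]: "dim_row (pencil n w) = n" "dim_col (pencil n w) = n"
  by (simp_all add: pencil_def)

lemma pencil_index: "i < n \<Longrightarrow> j < n \<Longrightarrow> pencil n w $$ (i, j) =
   X1 * constP (if j \<le> i then w (tri i j) else 0) +
   X2 * constP (if j = n - 1 then w (uCount n + i) else if i = j + 1 then -1 else 0) +
   X3 * (if i = j then 1 else 0)"
  by (simp add: pencil_def Y1_def Y2_def tri_def)

lemma pencil_diff: "i < n \<Longrightarrow> j < n \<Longrightarrow> pencil n w' $$ (i, j) - pencil n w $$ (i, j) =
   X1 * constP (if j \<le> i then w' (tri i j) - w (tri i j) else 0) +
   X2 * constP (if j = n - 1 then w' (uCount n + i) - w (uCount n + i) else 0)"
  by (simp add: pencil_index algebra_simps constP_diff[symmetric])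

text \<open>
  The derivatives of det(pencil) with respect to u_ij and v_i: changing one parameter
  changes exactly one entry of the pencil.
\<close>

definition Du :: "nat \<Rightarrow> (nat \<Rightarrow> real) \<Rightarrow> nat \<Rightarrow> nat \<Rightarrow> tripoly" where
  "Du n w i j = X1 * cofactor (pencil n w) i j"

definition Dv :: "nat \<Rightarrow> (nat \<Rightarrow> real) \<Rightarrow> nat \<Rightarrow> tripoly" where
  "Dv n w i = X2 * cofactor (pencil n w) i (n - 1)"

lemma det_pencil_update_u:
  assumes "j \<le> i" "i < n"
  shows "det (pencil n (w(tri i j := t))) = det (pencil n w) + constP (t - w (tri i j)) * Du n w i j"
proof -
  have u_pos: "tri i j < uCount n" using tri_less[OF assms] .
  have diff: "pencil n (w(tri i j := t)) $$ (i', j') - pencil n w $$ (i', j') =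
      (if (i', j') = (i, j) then X1 * constP (t - w (tri i j)) else 0)"
    if "i' < n" "j' < n" for i' j'
  proof -
    have "(if j' \<le> i' then (w(tri i j := t)) (tri i' j') - w (tri i' j') else 0) =
        (if (i', j') = (i, j) then t - w (tri i j) else 0)"
      using assms tri_inj[of j' i' j i] by auto
    moreover have "(if j' = n - 1 then (w(tri i j := t)) (uCount n + i') - w (uCount n + i') else 0) = 0"
      using u_pos by simp
    ultimately show ?thesis unfolding pencil_diff[OF that] by simp
  qed
  have same: "pencil n (w(tri i j := t)) $$ (i', j') = pencil n w $$ (i', j')"
    if "i' < n" "j' < n" "(i', j') \<noteq> (i, j)" for i' j'
    using diff[OF that(1,2)] that(3) by (auto simp: right_minus_eq)
  have "det (pencil n (w(tri i j := t))) = det (pencil n w) +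
      (pencil n (w(tri i j := t)) $$ (i, j) - pencil n w $$ (i, j)) * cofactor (pencil n w) i j"
    using assms by (intro det_change_one_entry[OF pencil_carrier pencil_carrier _ _ same]) auto
  thus ?thesis using diff[of i j] assms by (simp add: Du_def ac_simps)
qed

lemma det_pencil_update_v:
  assumes "i < n"
  shows "det (pencil n (w(uCount n + i := t))) = det (pencil n w) + constP (t - w (uCount n + i)) * Dv n w i"
proof -
  have diff: "pencil n (w(uCount n + i := t)) $$ (i', j') - pencil n w $$ (i', j') =
      (if (i', j') = (i, n - 1) then X2 * constP (t - w (uCount n + i)) else 0)"
    if "i' < n" "j' < n" for i' j'
  proof -
    have "(if j' \<le> i' then (w(uCount n + i := t)) (tri i' j') - w (tri i' j') else 0) = 0"
      using tri_less[of j' i' n] that by auto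
    moreover have "(if j' = n - 1 then (w(uCount n + i := t)) (uCount n + i') - w (uCount n + i') else 0) =
        (if (i', j') = (i, n - 1) then t - w (uCount n + i) else 0)"
      by auto
    ultimately show ?thesis unfolding pencil_diff[OF that] by simp
  qed
  have same: "pencil n (w(uCount n + i := t)) $$ (i', j') = pencil n w $$ (i', j')"
    if "i' < n" "j' < n" "(i', j') \<noteq> (i, n - 1)" for i' j'
    using diff[OF that(1,2)] that(3) by (auto simp: right_minus_eq)
  have "det (pencil n (w(uCount n + i := t))) = det (pencil n w) +
      (pencil n (w(uCount n + i := t)) $$ (i, n - 1) - pencil n w $$ (i, n - 1)) * cofactor (pencil n w) i (n - 1)"
    using assms by (intro det_change_one_entry[OF pencil_carrier pencil_carrier _ _ same]) auto
  thus ?thesis using diff[of i "n - 1"] assms by (simp add: Dv_def ac_simps)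
qed

lemma rderiv_affine: "rderiv (\<lambda>t. \<alpha> + (t - x0) * \<beta>) y = \<beta>"
proof -
  have d: "((\<lambda>t. \<alpha> + (t - x0) * \<beta>) has_real_derivative \<beta>) (at y)"
    by (auto intro!: derivative_eq_intros)
  show ?thesis
    unfolding rderiv_def
  proof (rule some_equality)
    fix D assume "((\<lambda>t. \<alpha> + (t - x0) * \<beta>) has_real_derivative D) (at y)"
    thus "D = \<beta>" using DERIV_unique d by blast
  qed (rule d)
qed

lemma jacobian_carrier: "jacobian n w \<in> carrier_mat (numParams n) (numParams n)"
  by (simp add: jacobian_def)

lemma jacobian_column_u:
  assumes "j \<le> i" "i < n" "r < numParams n"
  shows "jacobian n w $$ (r, tri i j) = mcoeff (Du n w i j) (monoms n ! r)"
proof -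
  have "tri i j < numParams n" using tri_less[OF assms(1,2)] numParams_eq[of n] by simp
  hence "jacobian n w $$ (r, tri i j) = rderiv (\<lambda>t. Gmap n (w(tri i j := t)) r) (w (tri i j))"
    using assms by (simp add: jacobian_def)
  also have "(\<lambda>t. Gmap n (w(tri i j := t)) r) =
      (\<lambda>t. Gmap n w r + (t - w (tri i j)) * mcoeff (Du n w i j) (monoms n ! r))"
    by (rule ext) (simp only: Gmap_def det_pencil_update_u[OF assms(1,2)] mcoeff_def, simp split: prod.splits)
  finally show ?thesis by (simp add: rderiv_affine)
qed

lemma jacobian_column_v:
  assumes "i < n" "r < numParams n"
  shows "jacobian n w $$ (r, uCount n + i) = mcoeff (Dv n w i) (monoms n ! r)"
proof -
  have "uCount n + i < numParams n" using assms numParams_eq[of n] by simp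
  hence "jacobian n w $$ (r, uCount n + i) = rderiv (\<lambda>t. Gmap n (w(uCount n + i := t)) r) (w (uCount n + i))"
    using assms by (simp add: jacobian_def)
  also have "(\<lambda>t. Gmap n (w(uCount n + i := t)) r) =
      (\<lambda>t. Gmap n w r + (t - w (uCount n + i)) * mcoeff (Dv n w i) (monoms n ! r))"
    by (rule ext) (simp only: Gmap_def det_pencil_update_v[OF assms(1)] mcoeff_def, simp split: prod.splits)
  finally show ?thesis by (simp add: rderiv_affine)
qed

section \<open>Kernel vectors of the Jacobian\<close>

text \<open>The polynomial whose coefficient vector is the image of (du, dv) under the Jacobian.\<close>

definition comb :: "nat \<Rightarrow> (nat \<Rightarrow> real) \<Rightarrow> (nat \<Rightarrow> nat \<Rightarrow> real) \<Rightarrow> (nat \<Rightarrow> real) \<Rightarrow> tripoly" where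
  "comb n w du dv = (\<Sum>i<n. \<Sum>j\<le>i. constP (du i j) * Du n w i j) + (\<Sum>i<n. constP (dv i) * Dv n w i)"

lemma jacobian_mult_vec:
  assumes v: "v \<in> carrier_vec (numParams n)" and r: "r < numParams n"
  shows "(jacobian n w *\<^sub>v v) $ r =
    mcoeff (comb n w (\<lambda>i j. v $ tri i j) (\<lambda>i. v $ (uCount n + i))) (monoms n ! r)"
proof -
  have "(jacobian n w *\<^sub>v v) $ r = (\<Sum>k<numParams n. jacobian n w $$ (r, k) * v $ k)"
    using r v jacobian_carrier[of n w] by (simp add: scalar_prod_def atLeast0LessThan)
  also have "\<dots> = (\<Sum>i<n. \<Sum>j\<le>i. v $ tri i j * mcoeff (Du n w i j) (monoms n ! r)) +
      (\<Sum>i<n. v $ (uCount n + i) * mcoeff (Dv n w i) (monoms n ! r))"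
    unfolding sum_params using jacobian_column_u[OF _ _ r] jacobian_column_v[OF _ r]
    by (auto intro!: sum.cong arg_cong2[where f = "(+)"])
  finally show ?thesis unfolding comb_def mcoeff_add mcoeff_sum mcoeff_constP_mult .
qed

lemma pencil_entry_homog: "i < n \<Longrightarrow> j < n \<Longrightarrow> homog 1 (pencil n w $$ (i, j))"
  unfolding pencil_index
  using homog_mult[OF homog_X1 homog_constP] homog_mult[OF homog_X2 homog_constP]
    homog_mult[OF homog_X3, of 0 "if i = j then 1 else 0"]
  by (auto intro!: homog_add)

lemma cofactor_pencil_homog:
  assumes "i < n" "j < n"
  shows "homog (n - 1) (cofactor (pencil n w) i j)"
proof -
  have "homog (n - 1) (det (mat_delete (pencil n w) i j))"
  proof (rule homog_det[OF mat_delete_carrier[OF pencil_carrier]])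
    fix a b assume "a < n - 1" "b < n - 1"
    moreover have "\<And>a b. a < n \<Longrightarrow> b < n \<Longrightarrow> homog (Suc 0) (pencil n w $$ (a, b))"
      using pencil_entry_homog by simp
    ultimately show "homog 1 (mat_delete (pencil n w) i j $$ (a, b))"
      unfolding mat_delete_def by auto
  qed
  moreover have "homog 0 ((-1 :: tripoly) ^ (i + j))"
    using homog_power[OF homog_uminus[OF homog_one], of "i + j"] by simp
  ultimately show ?thesis unfolding cofactor_def using homog_mult by fastforce
qed

lemma comb_homog:
  assumes "n \<ge> 1"
  shows "homog n (comb n w du dv)"
proof -
  have deg: "1 + (n - 1) = n" using assms by simp
  have "homog n (Du n w i j)" "homog n (Dv n w i)" if "j \<le> i" "i < n" for i j
  proof -
    have "homog (1 + (n - 1)) (Du n w i j)"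
      unfolding Du_def by (rule homog_mult[OF homog_X1 cofactor_pencil_homog]) (use that in auto)
    moreover have "homog (1 + (n - 1)) (Dv n w i)"
      unfolding Dv_def by (rule homog_mult[OF homog_X2 cofactor_pencil_homog]) (use that in auto)
    ultimately show "homog n (Du n w i j)" "homog n (Dv n w i)" unfolding deg .
  qed
  thus ?thesis unfolding comb_def by (auto intro!: homog_add homog_sum homog_constP_mult)
qed

lemma comb_eq_0_of_kernel:
  assumes n: "n \<ge> 1" and v: "v \<in> carrier_vec (numParams n)"
    and ker: "jacobian n w *\<^sub>v v = 0\<^sub>v (numParams n)"
  shows "comb n w (\<lambda>i j. v $ tri i j) (\<lambda>i. v $ (uCount n + i)) = 0"
proof (rule homog_eq_0_if_monoms_coeffs_0[OF comb_homog[OF n]])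
  show "tcoeff (comb n w (\<lambda>i j. v $ tri i j) (\<lambda>i. v $ (uCount n + i))) 0 0 n = 0"
    unfolding comb_def Du_def Dv_def by (simp add: tcoeff_sum tcoeff_X1_mult_0 tcoeff_X2_mult_0)
  fix r assume "r < length (monoms n)"
  hence "r < numParams n" by (simp add: length_monoms)
  thus "mcoeff (comb n w (\<lambda>i j. v $ tri i j) (\<lambda>i. v $ (uCount n + i))) (monoms n ! r) = 0"
    using jacobian_mult_vec[OF v] ker by (metis index_zero_vec(1))
qed

section \<open>The pencil at the special parameter point\<close>

text \<open>
  At wspec n we have Y1 = diag(1, ..., n) and Y2 with last column (1, ..., 1). Evaluated at
  (x1, x2, x3) the pencil is A = L + x2 * 1 * e_{n-1}^T, with L lower bidiagonal having
  diagonal ell k = (k+1) x1 + x3 and subdiagonal -x2.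
\<close>

definition wspec :: "nat \<Rightarrow> nat \<Rightarrow> real" where
  "wspec n k = (\<Sum>i<n. if k = tri i i then real i + 1 else 0) + (if uCount n \<le> k then 1 else 0)"

definition ell :: "real \<Rightarrow> real \<Rightarrow> nat \<Rightarrow> real" where
  "ell x1 x3 k = x1 * (real k + 1) + x3"

definition Aspec :: "nat \<Rightarrow> real \<Rightarrow> real \<Rightarrow> real \<Rightarrow> real mat" where
  "Aspec n x1 x2 x3 = mat n n (\<lambda>(i, j). (if i = j then ell x1 x3 i else 0) +
      x2 * (if j = n - 1 then 1 else if i = j + 1 then -1 else 0))"

lemma wspec_u:
  assumes "j \<le> i" "i < n"
  shows "wspec n (tri i j) = (if j = i then real i + 1 else 0)"
proof -
  have "(\<Sum>i'<n. if tri i j = tri i' i' then real i' + 1 else 0) =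
      (\<Sum>i'<n. if i' = i then (if j = i then real i + 1 else 0) else 0)"
    using tri_inj[of j i _ _] assms by (intro sum.cong) auto
  thus ?thesis using tri_less[OF assms] assms unfolding wspec_def by simp
qed

lemma wspec_v: "wspec n (uCount n + i) = 1"
proof -
  have "(\<Sum>i'<n. if uCount n + i = tri i' i' then real i' + 1 else 0) = 0"
    by (rule sum.neutral) (use tri_less[of _ _ n] in fastforce)
  thus ?thesis unfolding wspec_def by simp
qed

lemma ev_pencil_wspec: "map_mat (ev x1 x2 x3) (pencil n (wspec n)) = Aspec n x1 x2 x3"
proof (rule eq_matI)
  fix i j assume "i < dim_row (Aspec n x1 x2 x3)" "j < dim_col (Aspec n x1 x2 x3)"
  hence ij: "i < n" "j < n" by (auto simp: Aspec_def)
  have u: "(if j \<le> i then wspec n (tri i j) else 0) = (if i = j then real i + 1 else 0)"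
    using wspec_u[of j i n] ij by auto
  have "map_mat (ev x1 x2 x3) (pencil n (wspec n)) $$ (i, j) = ev x1 x2 x3 (pencil n (wspec n) $$ (i, j))"
    using ij by simp
  thus "map_mat (ev x1 x2 x3) (pencil n (wspec n)) $$ (i, j) = Aspec n x1 x2 x3 $$ (i, j)"
    unfolding pencil_index[OF ij] u wspec_v using ij by (simp add: ev_hom.hom_add ev_hom.hom_mult Aspec_def ell_def algebra_simps)
qed (auto simp: Aspec_def)

text \<open>
  L^{-1} has entries x2^(i-j) / (ell j * ... * ell i) for j <= i, and q = L^{-1} * 1 has
  entries Lsum i. By Sherman-Morrison, A^{-1} = L^{-1} - x2 q e_{n-1}^T L^{-1} / smDen with
  smDen = 1 + x2 * Lsum (n-1).
\<close>

definition Linv :: "real \<Rightarrow> real \<Rightarrow> real \<Rightarrow> nat \<Rightarrow> nat \<Rightarrow> real" where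
  "Linv x1 x2 x3 i j = (if j \<le> i then x2 ^ (i - j) / (\<Prod>k\<in>{j..i}. ell x1 x3 k) else 0)"

definition Lsum :: "real \<Rightarrow> real \<Rightarrow> real \<Rightarrow> nat \<Rightarrow> real" where
  "Lsum x1 x2 x3 i = (\<Sum>m\<le>i. Linv x1 x2 x3 i m)"

definition smDen :: "nat \<Rightarrow> real \<Rightarrow> real \<Rightarrow> real \<Rightarrow> real" where
  "smDen n x1 x2 x3 = 1 + x2 * Lsum x1 x2 x3 (n - 1)"

definition Ainv :: "nat \<Rightarrow> real \<Rightarrow> real \<Rightarrow> real \<Rightarrow> nat \<Rightarrow> nat \<Rightarrow> real" where
  "Ainv n x1 x2 x3 i j =
     Linv x1 x2 x3 i j - x2 * Lsum x1 x2 x3 i * Linv x1 x2 x3 (n - 1) j / smDen n x1 x2 x3"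

lemma Linv_rec:
  assumes "ell x1 x3 i \<noteq> 0"
  shows "ell x1 x3 i * Linv x1 x2 x3 i j - x2 * (if i \<ge> 1 then Linv x1 x2 x3 (i - 1) j else 0) =
    (if i = j then 1 else 0)"
proof (cases "j < i")
  case True
  then obtain i' where i': "i = Suc i'" "j \<le> i'" by (cases i) auto
  have "{j..Suc i'} = insert (Suc i') {j..i'}" using i' by auto
  hence "(\<Prod>k\<in>{j..i}. ell x1 x3 k) = ell x1 x3 i * (\<Prod>k\<in>{j..i'}. ell x1 x3 k)" using i' by simp
  moreover have "x2 ^ (i - j) = x2 * x2 ^ (i' - j)" using i' by (simp add: Suc_diff_le)
  ultimately show ?thesis using assms i' by (simp add: Linv_def)
qed (use assms in \<open>auto simp: Linv_def\<close>)

lemma Lsum_rec: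
  assumes "ell x1 x3 i \<noteq> 0"
  shows "ell x1 x3 i * Lsum x1 x2 x3 i - x2 * (if i \<ge> 1 then Lsum x1 x2 x3 (i - 1) else 0) = 1"
proof -
  have "x2 * (if i \<ge> 1 then Lsum x1 x2 x3 (i - 1) else 0) =
      (\<Sum>m\<le>i. x2 * (if i \<ge> 1 then Linv x1 x2 x3 (i - 1) m else 0))"
    by (cases i) (simp_all add: Lsum_def sum_distrib_left Linv_def)
  hence "ell x1 x3 i * Lsum x1 x2 x3 i - x2 * (if i \<ge> 1 then Lsum x1 x2 x3 (i - 1) else 0) =
      (\<Sum>m\<le>i. ell x1 x3 i * Linv x1 x2 x3 i m - x2 * (if i \<ge> 1 then Linv x1 x2 x3 (i - 1) m else 0))"
    by (simp add: Lsum_def sum_distrib_left sum_subtractf)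
  also have "\<dots> = 1" using Linv_rec[OF assms] by simp
  finally show ?thesis .
qed

lemma Aspec_right_inverse:
  assumes n: "n \<ge> 1" and ell: "\<And>k. k < n \<Longrightarrow> ell x1 x3 k \<noteq> 0" and den: "smDen n x1 x2 x3 \<noteq> 0"
  shows "Aspec n x1 x2 x3 * mat n n (\<lambda>(i, j). Ainv n x1 x2 x3 i j) = 1\<^sub>m n"
proof (rule eq_matI)
  fix i j assume "i < dim_row (1\<^sub>m n)" "j < dim_col (1\<^sub>m n)"
  hence i: "i < n" and j: "j < n" by auto
  let ?L = "Linv x1 x2 x3" and ?q = "Lsum x1 x2 x3" and ?s = "smDen n x1 x2 x3" and ?e = "ell x1 x3"
  define b where "b k = Ainv n x1 x2 x3 k j" for k
  have Aik: "Aspec n x1 x2 x3 $$ (i, k) = (if k = i then ?e i else 0) + (if k = n - 1 then x2 else 0)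
      - (if i \<ge> 1 \<and> k = i - 1 then x2 else 0)" if "k < n" for k
    using that i by (auto simp: Aspec_def)
  have "(Aspec n x1 x2 x3 * mat n n (\<lambda>(i, j). Ainv n x1 x2 x3 i j)) $$ (i, j) =
      (\<Sum>k<n. Aspec n x1 x2 x3 $$ (i, k) * b k)"
    using i j by (simp add: Aspec_def scalar_prod_def b_def atLeast0LessThan[symmetric])
  also have "\<dots> = (\<Sum>k<n. (if k = i then ?e i * b k else 0) + (if k = n - 1 then x2 * b k else 0)
      - (if i \<ge> 1 \<and> k = i - 1 then x2 * b k else 0))"
    by (rule sum.cong) (auto simp: Aik algebra_simps)
  also have "\<dots> = ?e i * b i + x2 * b (n - 1) - (if i \<ge> 1 then x2 * b (i - 1) else 0)"
    using i n by (simp add: sum_subtractf sum.distrib; arith)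
  also have "\<dots> = (?e i * ?L i j - x2 * (if i \<ge> 1 then ?L (i - 1) j else 0))
      - x2 * ?L (n - 1) j / ?s * (?e i * ?q i - x2 * (if i \<ge> 1 then ?q (i - 1) else 0))
      + x2 * ?L (n - 1) j * (1 - x2 * ?q (n - 1) / ?s)"
    unfolding b_def Ainv_def by (simp add: algebra_simps)
  also have "\<dots> = (if i = j then 1 else 0) - x2 * ?L (n - 1) j / ?s
      + x2 * ?L (n - 1) j * (1 - x2 * ?q (n - 1) / ?s)"
    unfolding Linv_rec[OF ell[OF i]] Lsum_rec[OF ell[OF i]] by simp
  also have "\<dots> = (if i = j then 1 else 0)"
  proof -
    have "1 - x2 * ?q (n - 1) / ?s = 1 / ?s" using den unfolding smDen_def by (simp add: field_simps)
    thus ?thesis by simp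
  qed
  finally show "(Aspec n x1 x2 x3 * mat n n (\<lambda>(i, j). Ainv n x1 x2 x3 i j)) $$ (i, j) = 1\<^sub>m n $$ (i, j)"
    using i j by simp
qed (auto simp: Aspec_def)

lemma ell_pos: "x1 \<ge> 0 \<Longrightarrow> x3 > 0 \<Longrightarrow> ell x1 x3 k > 0"
  unfolding ell_def by (simp add: add_nonneg_pos)

lemma Linv_nonneg: "x1 \<ge> 0 \<Longrightarrow> x2 \<ge> 0 \<Longrightarrow> x3 > 0 \<Longrightarrow> Linv x1 x2 x3 i j \<ge> 0"
  unfolding Linv_def using ell_pos[of x1 x3] by (auto intro!: divide_nonneg_pos prod_pos)

lemma smDen_pos: "x1 \<ge> 0 \<Longrightarrow> x2 \<ge> 0 \<Longrightarrow> x3 > 0 \<Longrightarrow> smDen n x1 x2 x3 > 0"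
  unfolding smDen_def Lsum_def by (simp add: add_pos_nonneg sum_nonneg Linv_nonneg)

text \<open>
  Evaluating comb at the special point on the region x1, x2 >= 0, x3 > 0 and dividing by
  det A gives the scalar relation between du, dv and the entries of A^{-1}.
\<close>

definition relation :: "nat \<Rightarrow> (nat \<Rightarrow> nat \<Rightarrow> real) \<Rightarrow> (nat \<Rightarrow> real) \<Rightarrow> real \<Rightarrow> real \<Rightarrow> real \<Rightarrow> real" where
  "relation n du dv x1 x2 x3 = (\<Sum>i<n. \<Sum>j\<le>i. du i j * x1 * Ainv n x1 x2 x3 j i) +
     (\<Sum>i<n. dv i * x2 * Ainv n x1 x2 x3 (n - 1) i)"

lemma relation_of_comb_eq_0:
  assumes n: "n \<ge> 1" and comb0: "comb n (wspec n) du dv = 0"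
    and x: "x1 \<ge> 0" "x2 \<ge> 0" "x3 > 0"
  shows "relation n du dv x1 x2 x3 = 0"
proof -
  let ?A = "Aspec n x1 x2 x3" and ?B = "mat n n (\<lambda>(i, j). Ainv n x1 x2 x3 i j)"
  have AB: "?A * ?B = 1\<^sub>m n"
    using Aspec_right_inverse[OF n] ell_pos[OF x(1,3)] smDen_pos[OF x] by (metis less_irrefl)
  have A: "?A \<in> carrier_mat n n" by (simp add: Aspec_def)
  have cof: "ev x1 x2 x3 (cofactor (pencil n (wspec n)) i j) = det ?A * Ainv n x1 x2 x3 j i"
    if "i < n" "j < n" for i j
    using cofactor_from_right_inverse[OF A _ AB that] that
    by (simp add: ev_hom.hom_cofactor ev_pencil_wspec)
  have "det ?A * det ?B = 1" using det_mult[OF A, of ?B] AB by simp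
  hence "det ?A \<noteq> 0" by auto
  moreover have "ev x1 x2 x3 (comb n (wspec n) du dv) = det ?A * relation n du dv x1 x2 x3"
    unfolding comb_def Du_def Dv_def relation_def using n
    by (simp add: ev_hom.hom_add ev_hom.hom_sum ev_hom.hom_mult cof sum_distrib_left algebra_simps)
  ultimately show ?thesis using comb0 by simp
qed

section \<open>The relation forces du = 0 and dv = 0\<close>

lemma poly_eq_0_of_vanishing_on_pos:
  fixes p :: "real poly"
  assumes "\<And>t. t > 0 \<Longrightarrow> poly p t = 0"
  shows "p = 0"
proof (rule ccontr)
  assume "p \<noteq> 0"
  hence "finite {x. poly p x = 0}" by (rule poly_roots_finite)
  moreover have "{0<..} \<subseteq> {x. poly p x = 0}" using assms by auto
  ultimately show False using infinite_Ioi finite_subset by blast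
qed

lemma partial_fractions_independent:
  fixes c :: "nat \<Rightarrow> real"
  assumes h: "\<And>t. t > 0 \<Longrightarrow> (\<Sum>i<n. c i / (real i + 1 + t)) = 0" and i0: "i0 < n"
  shows "c i0 = 0"
proof -
  define p where "p = (\<Sum>i<n. smult (c i) (\<Prod>k\<in>{..<n} - {i}. [:real k + 1, 1:]))"
  have poly_p: "poly p t = (\<Sum>i<n. c i * (\<Prod>k\<in>{..<n} - {i}. real k + 1 + t))" for t
    unfolding p_def by (simp add: poly_sum poly_prod add.commute)
  have "poly p t = 0" if t: "t > 0" for t
  proof -
    have "poly p t = (\<Sum>i<n. c i / (real i + 1 + t) * (\<Prod>k<n. real k + 1 + t))"
      unfolding poly_p
    proof (rule sum.cong[OF refl])
      fix i assume "i \<in> {..<n}"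
      hence "(\<Prod>k<n. real k + 1 + t) = (real i + 1 + t) * (\<Prod>k\<in>{..<n} - {i}. real k + 1 + t)"
        by (simp add: prod.remove)
      moreover have "real i + 1 + t \<noteq> 0" using t by simp
      ultimately show "c i * (\<Prod>k\<in>{..<n} - {i}. real k + 1 + t) =
          c i / (real i + 1 + t) * (\<Prod>k<n. real k + 1 + t)" by simp
    qed
    also have "\<dots> = (\<Sum>i<n. c i / (real i + 1 + t)) * (\<Prod>k<n. real k + 1 + t)"
      by (simp add: sum_distrib_right)
    finally show ?thesis using h[OF t] by simp
  qed
  hence "p = 0" by (rule poly_eq_0_of_vanishing_on_pos)
  hence "0 = poly p (- real i0 - 1)" by simp
  also have "\<dots> = c i0 * (\<Prod>k\<in>{..<n} - {i0}. real k - real i0)"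
    unfolding poly_p using i0
    by (subst sum.remove[of _ i0]) (auto intro!: sum.neutral prod_zero)
  finally show ?thesis by (simp add: prod_zero_iff)
qed

lemma continuous_zero_at_0:
  fixes G :: "real \<Rightarrow> real"
  assumes "isCont G 0" and "\<And>s. s > 0 \<Longrightarrow> G s = 0"
  shows "G 0 = 0"
proof -
  have "(G \<longlongrightarrow> G 0) (at_right 0)" using assms(1) by (simp add: isCont_def filterlim_at_split)
  moreover have "eventually (\<lambda>s. G s = 0) (at_right (0::real))"
    by (rule eventually_at_rightI[of 0 1]) (auto intro: assms(2))
  hence "(G \<longlongrightarrow> 0) (at_right 0)" by (rule tendsto_eventually)
  ultimately show ?thesis using tendsto_unique[OF trivial_limit_at_right_real] by blast
qed

lemma Linv_x2_0: "Linv x1 0 x3 i j = (if i = j then 1 / ell x1 x3 i else 0)"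
  unfolding Linv_def by auto

lemma isCont_Linv [continuous_intros]: "isCont (\<lambda>s. Linv x1 s x3 i j) s0"
proof -
  have "(\<lambda>s. Linv x1 s x3 i j) =
      (\<lambda>s. s ^ (i - j) * (if j \<le> i then 1 / (\<Prod>k\<in>{j..i}. ell x1 x3 k) else 0))"
    unfolding Linv_def by auto
  thus ?thesis by (auto intro!: continuous_intros)
qed

lemma isCont_Lsum [continuous_intros]: "isCont (\<lambda>s. Lsum x1 s x3 i) s0"
  unfolding Lsum_def by (auto intro!: continuous_intros)

text \<open>At x2 = 0 the matrix A is diagonal: the relation isolates the diagonal du i i.\<close>

lemma relation_diag:
  assumes rel: "\<And>t. t > 0 \<Longrightarrow> relation n du dv 1 0 t = 0" and i: "i < n"
  shows "du i i = 0"
proof (rule partial_fractions_independent[OF _ i])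
  fix t :: real assume t: "t > 0"
  have "relation n du dv 1 0 t = (\<Sum>i<n. \<Sum>j\<le>i. du i j * Ainv n 1 0 t j i)"
    by (simp add: relation_def)
  also have "\<dots> = (\<Sum>i<n. \<Sum>j\<le>i. if j = i then du i i / (real i + 1 + t) else 0)"
    by (intro sum.cong refl) (auto simp: Ainv_def Linv_x2_0 ell_def)
  finally show "(\<Sum>i<n. du i i / (real i + 1 + t)) = 0" using rel[OF t] by simp
qed

text \<open>At x1 = 0, x3 = 1 only the dv terms remain, and they form a polynomial in x2.\<close>

lemma relation_v:
  assumes rel: "\<And>s. s > 0 \<Longrightarrow> relation n du dv 0 s 1 = 0" and i: "i < n"
  shows "dv i = 0"
proof -
  define p where "p = (\<Sum>i<n. monom (dv i) (n - 1 - i))"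
  have "poly p s = 0" if s: "s > 0" for s
  proof -
    have den: "smDen n 0 s 1 > 0" using smDen_pos[of 0 s 1] s by simp
    have "Ainv n 0 s 1 (n - 1) i = s ^ (n - 1 - i) / smDen n 0 s 1" if "i < n" for i
    proof -
      have "Ainv n 0 s 1 (n - 1) i = Linv 0 s 1 (n - 1) i * (1 - s * Lsum 0 s 1 (n - 1) / smDen n 0 s 1)"
        unfolding Ainv_def by (simp add: right_diff_distrib)
      also have "1 - s * Lsum 0 s 1 (n - 1) / smDen n 0 s 1 = 1 / smDen n 0 s 1"
        using den unfolding smDen_def by (simp add: field_simps)
      finally show ?thesis using that by (simp add: Linv_def ell_def)
    qed
    hence "relation n du dv 0 s 1 = s / smDen n 0 s 1 * poly p s"
      unfolding relation_def p_def by (simp add: poly_sum poly_monom sum_distrib_left field_simps)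
    thus ?thesis using rel[OF s] s den by simp
  qed
  hence "p = 0" by (rule poly_eq_0_of_vanishing_on_pos)
  hence "0 = coeff p (n - 1 - i)" by simp
  also have "\<dots> = (\<Sum>k<n. if k = i then dv i else 0)"
    unfolding p_def coeff_sum using i by (intro sum.cong) (auto simp: coeff_monom)
  also have "\<dots> = dv i" using i by simp
  finally show ?thesis by simp
qed

text \<open>
  Once dv and the diagonal of du vanish, the relation at x1 = 1 reduces (after dividing by
  -x2 / smDen) to the vanishing of offdiag_sum.
\<close>

definition offdiag_sum :: "nat \<Rightarrow> (nat \<Rightarrow> nat \<Rightarrow> real) \<Rightarrow> real \<Rightarrow> real \<Rightarrow> real" where
  "offdiag_sum n du s t = (\<Sum>i<n. \<Sum>j<i. du i j * Lsum 1 s t j * Linv 1 s t (n - 1) i)"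

lemma offdiag_sum_eq_0:
  assumes rel: "relation n du dv 1 s t = 0" and s: "s > 0" and t: "t > 0"
    and dv: "\<And>i. i < n \<Longrightarrow> dv i = 0" and diag: "\<And>i. i < n \<Longrightarrow> du i i = 0"
  shows "offdiag_sum n du s t = 0"
proof -
  let ?c = "- s / smDen n 1 s t"
  have den: "smDen n 1 s t > 0" using smDen_pos[of 1 s t] s t by simp
  have row: "(\<Sum>j\<le>i. du i j * Ainv n 1 s t j i) =
      (\<Sum>j<i. ?c * (du i j * Lsum 1 s t j * Linv 1 s t (n - 1) i))" if "i < n" for i
  proof -
    have "(\<Sum>j\<le>i. du i j * Ainv n 1 s t j i) = (\<Sum>j<i. du i j * Ainv n 1 s t j i)"
      using diag[OF that] by (simp add: lessThan_Suc_atMost[symmetric])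
    also have "\<dots> = (\<Sum>j<i. ?c * (du i j * Lsum 1 s t j * Linv 1 s t (n - 1) i))"
    proof (intro sum.cong refl)
      fix j assume "j \<in> {..<i}"
      hence "Linv 1 s t j i = 0" by (simp add: Linv_def)
      thus "du i j * Ainv n 1 s t j i = ?c * (du i j * Lsum 1 s t j * Linv 1 s t (n - 1) i)"
        unfolding Ainv_def by simp
    qed
    finally show ?thesis .
  qed
  have "relation n du dv 1 s t = (\<Sum>i<n. \<Sum>j\<le>i. du i j * Ainv n 1 s t j i)"
    using dv by (simp add: relation_def)
  also have "\<dots> = ?c * offdiag_sum n du s t"
    unfolding offdiag_sum_def sum_distrib_left using row by simp
  finally show ?thesis using rel s den by simp
qed

text \<open>
  If the rows below m vanish, then offdiag_sum is s^(n-1-m) times a function continuous in s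
  whose value at s = 0 is a positive multiple of the partial fraction sum of row m.
\<close>

lemma offdiag_row_partial_fractions:
  assumes m: "m < n" and t: "t > 0"
    and below: "\<And>i j. m < i \<Longrightarrow> i < n \<Longrightarrow> j < i \<Longrightarrow> du i j = 0"
    and zero: "\<And>s. s > 0 \<Longrightarrow> offdiag_sum n du s t = 0"
  shows "(\<Sum>j<m. du m j / (real j + 1 + t)) = 0"
proof -
  define P where "P i = (\<Prod>k\<in>{i..n - 1}. ell 1 t k)" for i
  have P_pos: "P i > 0" for i unfolding P_def using ell_pos[of 1 t] t by (auto intro!: prod_pos)
  define G where "G s = (\<Sum>i<Suc m. \<Sum>j<i. du i j * Lsum 1 s t j * (s ^ (m - i) / P i))" for s
  have "offdiag_sum n du s t = s ^ (n - 1 - m) * G s" for s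
  proof -
    have "offdiag_sum n du s t = (\<Sum>i<Suc m. \<Sum>j<i. du i j * Lsum 1 s t j * Linv 1 s t (n - 1) i)"
      unfolding offdiag_sum_def using below m by (intro sum.mono_neutral_right) auto
    also have "\<dots> = (\<Sum>i<Suc m. \<Sum>j<i. s ^ (n - 1 - m) * (du i j * Lsum 1 s t j * (s ^ (m - i) / P i)))"
    proof (intro sum.cong refl)
      fix i j assume "i \<in> {..<Suc m}"
      moreover from this have "s ^ (n - 1 - i) = s ^ (n - 1 - m) * s ^ (m - i)"
        using m by (simp add: power_add[symmetric])
      ultimately show "du i j * Lsum 1 s t j * Linv 1 s t (n - 1) i =
          s ^ (n - 1 - m) * (du i j * Lsum 1 s t j * (s ^ (m - i) / P i))"
        using m unfolding Linv_def P_def by simp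
    qed
    finally show ?thesis unfolding G_def by (simp only: sum_distrib_left)
  qed
  hence "G s = 0" if "s > 0" for s using zero[OF that] that by simp
  moreover have "isCont G 0"
    unfolding G_def using P_pos by (intro continuous_intros) (simp add: less_imp_neq[symmetric])
  ultimately have "G 0 = 0" using continuous_zero_at_0 by blast
  moreover have "G 0 = (\<Sum>j<m. du m j / (real j + 1 + t)) / P m"
    unfolding G_def Lsum_def Linv_x2_0
    by (simp add: sum_divide_distrib power_0_left ell_def algebra_simps cong: if_cong)
  ultimately show ?thesis using P_pos[of m] by simp
qed

lemma relation_offdiag:
  assumes rel: "\<And>s t. s > 0 \<Longrightarrow> t > 0 \<Longrightarrow> relation n du dv 1 s t = 0"
    and dv: "\<And>i. i < n \<Longrightarrow> dv i = 0" and diag: "\<And>i. i < n \<Longrightarrow> du i i = 0"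
  shows "i < n \<Longrightarrow> j < i \<Longrightarrow> du i j = 0"
proof (induction i arbitrary: j rule: nat_descend_induct[where n = n])
  case (descend m)
  have below: "du i j' = 0" if "m < i" "i < n" "j' < i" for i j'
    using descend.IH that by blast
  have "(\<Sum>j<m. du m j / (real j + 1 + t)) = 0" if t: "t > 0" for t
  proof (rule offdiag_row_partial_fractions[OF descend.prems(1) t below])
    fix s :: real assume s: "s > 0"
    show "offdiag_sum n du s t = 0" by (rule offdiag_sum_eq_0[OF rel[OF s t] s t dv diag])
  qed
  thus ?case by (rule partial_fractions_independent[OF _ descend.prems(2)])
qed simp

lemma relation_forces_zero:
  assumes rel: "\<And>x1 x2 x3. x1 \<ge> 0 \<Longrightarrow> x2 \<ge> 0 \<Longrightarrow> x3 > 0 \<Longrightarrow> relation n du dv x1 x2 x3 = 0"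
  shows "\<And>i j. i < n \<Longrightarrow> j \<le> i \<Longrightarrow> du i j = 0" and "\<And>i. i < n \<Longrightarrow> dv i = 0"
proof -
  have diag: "du i i = 0" if "i < n" for i
    by (rule relation_diag[where dv = dv, OF _ that]) (simp add: rel)
  show dv: "dv i = 0" if "i < n" for i
    by (rule relation_v[where du = du, OF _ that]) (simp add: rel)
  have offdiag: "du i j = 0" if "i < n" "j < i" for i j
    by (rule relation_offdiag[where du = du and dv = dv, OF _ dv diag that]) (simp add: rel)
  show "du i j = 0" if "i < n" "j \<le> i" for i j
    using that diag offdiag by (cases "j = i") auto
qed

lemma vec_eq_0_from_params:
  fixes v :: "real vec"
  assumes v: "v \<in> carrier_vec (numParams n)"
    and u0: "\<And>i j. i < n \<Longrightarrow> j \<le> i \<Longrightarrow> v $ tri i j = 0" and v0: "\<And>i. i < n \<Longrightarrow> v $ (uCount n + i) = 0"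
  shows "v = 0\<^sub>v (numParams n)"
proof -
  have "(\<Sum>k<numParams n. (v $ k)\<^sup>2) = 0"
    unfolding sum_params using u0 v0 by simp
  hence "\<forall>k\<in>{..<numParams n}. (v $ k)\<^sup>2 = 0" by (subst sum_nonneg_eq_0_iff[symmetric]) auto
  thus ?thesis using v by (intro eq_vecI) auto
qed

theorem mainTheorem13:
  fixes n :: nat
  assumes "n \<ge> 1"
  shows "\<exists>w :: nat \<Rightarrow> real. det (jacobian n w) \<noteq> 0"
proof
  let ?J = "jacobian n (wspec n)"
  show "det ?J \<noteq> 0"
  proof
    assume "det ?J = 0"
    then obtain v where v: "v \<in> carrier_vec (numParams n)" "v \<noteq> 0\<^sub>v (numParams n)"
      and ker: "?J *\<^sub>v v = 0\<^sub>v (numParams n)"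
      using det_0_iff_vec_prod_zero[OF jacobian_carrier] by blast
    define du where "du i j = v $ tri i j" for i j
    define dv where "dv i = v $ (uCount n + i)" for i
    have "comb n (wspec n) du dv = 0"
      unfolding du_def dv_def by (rule comb_eq_0_of_kernel[OF assms v(1) ker])
    hence "relation n du dv x1 x2 x3 = 0" if "x1 \<ge> 0" "x2 \<ge> 0" "x3 > 0" for x1 x2 x3
      using relation_of_comb_eq_0[OF assms _ that] by blast
    hence "v = 0\<^sub>v (numParams n)"
      using relation_forces_zero vec_eq_0_from_params[OF v(1)] unfolding du_def dv_def by blast
    with v(2) show False ..
  qed
qed

end
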